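(* Let $G$ be a finite simple (unweighted) graph with $n$ vertices. Then \[\sum_{\lambda\vdash n}[X_{P_\lambda}]X_G=1,\] i.e. $\tau_G(1)=1$.
   Context: $X_G=\sum_\kappa\prod_v x_{\kappa(v)}$ over proper colourings $\kappa:V(G)\to\{1,2,\dots\}$. $P_\lambda$ is the disjoint union of paths $P_{\lambda_1},\dots,P_{\lambda_{\ell(\lambda)}}$ ($P_n$ the path on $n$ vertices); $\{X_{P_\lambda}\}$ is a basis of the algebra of symmetric functions over $\mathbb{Q}$, and $[X_{P_\lambda}]f$ is the coefficient of $X_{P_\lambda}$ in $f$. $\tau_G(x)=\sum_\lambda [X_{P_\lambda}]X_G\, x^{\ell(\lambda)}$. *)

theory Defs
  imports Complex_Main "HOL-Library.FuncSet"
begin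

definition simple_graph :: "'a set \<Rightarrow> ('a \<Rightarrow> 'a \<Rightarrow> bool) \<Rightarrow> bool" where
  "simple_graph V E \<longleftrightarrow> finite V \<and> (\<forall>u v. E u v \<longrightarrow> E v u)
     \<and> (\<forall>v. \<not> E v v) \<and> (\<forall>u v. E u v \<longrightarrow> u \<in> V \<and> v \<in> V)"

definition proper_colourings :: "'a set \<Rightarrow> ('a \<Rightarrow> 'a \<Rightarrow> bool) \<Rightarrow> ('a \<Rightarrow> nat) set" where
  "proper_colourings V E =
     {\<kappa> \<in> V \<rightarrow>\<^sub>E {1..}. \<forall>u\<in>V. \<forall>v\<in>V. E u v \<longrightarrow> \<kappa> u \<noteq> \<kappa> v}"

text \<open>Coefficient of the monomial \<Prod>_i x_i^(\<alpha> i) in the chromatic symmetric function X_G.\<close>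
definition chrom_coeff :: "'a set \<Rightarrow> ('a \<Rightarrow> 'a \<Rightarrow> bool) \<Rightarrow> (nat \<Rightarrow> nat) \<Rightarrow> nat" where
  "chrom_coeff V E \<alpha> =
     card {\<kappa> \<in> proper_colourings V E. \<forall>i. card {v \<in> V. \<kappa> v = i} = \<alpha> i}"

definition partitions :: "nat \<Rightarrow> nat list set" where
  "partitions n = {\<mu>. sorted_wrt (\<ge>) \<mu> \<and> (\<forall>p \<in> set \<mu>. 0 < p) \<and> sum_list \<mu> = n}"

definition path_forest_V :: "nat list \<Rightarrow> (nat \<times> nat) set" where
  "path_forest_V \<mu> = {(i, j). i < length \<mu> \<and> j < \<mu> ! i}"

definition path_forest_E :: "nat list \<Rightarrow> nat \<times> nat \<Rightarrow> nat \<times> nat \<Rightarrow> bool" where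
  "path_forest_E \<mu> u v \<longleftrightarrow> u \<in> path_forest_V \<mu> \<and> v \<in> path_forest_V \<mu> \<and>
     fst u = fst v \<and> (snd v = snd u + 1 \<or> snd u = snd v + 1)"

text \<open>X_G = \<Sum>_{\<mu> \<turnstile> n} c \<mu> X_{P_\<mu>} (over \<rat>), compared monomial by monomial.\<close>
definition path_expansion :: "'a set \<Rightarrow> ('a \<Rightarrow> 'a \<Rightarrow> bool) \<Rightarrow> nat \<Rightarrow> (nat list \<Rightarrow> rat) \<Rightarrow> bool" where
  "path_expansion V E n c \<longleftrightarrow> (\<forall>\<mu>. \<mu> \<notin> partitions n \<longrightarrow> c \<mu> = 0) \<and>
     (\<forall>\<alpha>. of_nat (chrom_coeff V E \<alpha>) =
        (\<Sum>\<mu>\<in>partitions n. c \<mu> * of_nat (chrom_coeff (path_forest_V \<mu>) (path_forest_E \<mu>) \<alpha>)))"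

text \<open>[X_{P_\<mu>}] X_G for a graph on n = card V vertices (unique by the basis property).\<close>
definition path_coeff :: "'a set \<Rightarrow> ('a \<Rightarrow> 'a \<Rightarrow> bool) \<Rightarrow> nat list \<Rightarrow> rat" where
  "path_coeff V E = (THE c. path_expansion V E (card V) c)"

end

theory Submission
  imports Defs "HOL-Library.Multiset" "HOL-Combinatorics.Permutations"
begin

text \<open>Inclusion--exclusion over the edge subsets \<open>S\<close> of \<open>G\<close> expands \<open>X\<^sub>G\<close> in power sums,
  \<open>X\<^sub>G = \<Sum>\<^sub>S (-1)\<^bsup>|S|\<^esup> p\<^sub>\<lambda>\<^sub>(\<^sub>S\<^sub>)\<close>, where \<open>\<lambda>(S)\<close> lists the sizes of the connected components
  of \<open>(V, S)\<close>. For a path forest \<open>P\<^sub>\<mu>\<close> the full edge set contributes \<open>\<plusminus>p\<^sub>\<mu>\<close> and every proper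
  subset has more components than \<open>\<mu>\<close> has parts, so the \<open>X\<^sub>P\<^sub>\<^sub>\<mu>\<close> are related to the linearly
  independent \<open>p\<^sub>\<mu>\<close> by a triangular matrix. Hence they form a basis and \<open>[X\<^sub>P\<^sub>\<^sub>\<mu>] X\<^sub>G\<close> is well
  defined. Finally, the coefficient of \<open>x\<^sub>1 \<cdots> x\<^sub>n\<close> in \<open>X\<^sub>H\<close> counts the bijective colourings of
  \<open>H\<close>, a nonzero number \<open>N\<close> depending only on \<open>n\<close>; comparing it on both sides of
  \<open>X\<^sub>G = \<Sum>\<^sub>\<mu> [X\<^sub>P\<^sub>\<^sub>\<mu>] X\<^sub>G X\<^sub>P\<^sub>\<^sub>\<mu>\<close> gives \<open>N = N \<Sum>\<^sub>\<mu> [X\<^sub>P\<^sub>\<^sub>\<mu>] X\<^sub>G\<close>.\<close>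

section \<open>Triangular systems\<close>

lemma triangular_coeffs_eq_0:
  fixes M :: "'p \<Rightarrow> 'p \<Rightarrow> 'f::idom" and r :: "'p \<Rightarrow> nat"
  assumes "finite P"
    and diag: "\<forall>\<nu>\<in>P. M \<nu> \<nu> \<noteq> 0"
    and tri: "\<forall>\<mu>\<in>P. \<forall>\<nu>\<in>P. M \<mu> \<nu> \<noteq> 0 \<longrightarrow> \<mu> \<noteq> \<nu> \<longrightarrow> r \<mu> < r \<nu>"
    and d: "\<forall>\<nu>\<in>P. (\<Sum>\<mu>\<in>P. d \<mu> * M \<mu> \<nu>) = 0"
  shows "\<forall>\<nu>\<in>P. d \<nu> = 0"
proof -
  have "d \<nu> = 0" if "\<nu> \<in> P" "r \<nu> = k" for \<nu> k
    using that
  proof (induction k arbitrary: \<nu> rule: less_induct)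
    case (less k)
    have "(\<Sum>\<mu>\<in>P - {\<nu>}. d \<mu> * M \<mu> \<nu>) = 0"
      using less tri by (intro sum.neutral) (metis DiffE insertI1 mult_eq_0_iff)
    then have "d \<nu> * M \<nu> \<nu> = 0"
      using d less.prems(1) sum.remove[OF assms(1) less.prems(1), of "\<lambda>\<mu>. d \<mu> * M \<mu> \<nu>"] by simp
    then show ?case using diag less.prems(1) by simp
  qed
  then show ?thesis by blast
qed

lemma in_span_by_solving_row:
  fixes X b :: "'p \<Rightarrow> 'x \<Rightarrow> 'f::field" and T :: "'p \<Rightarrow> 'p \<Rightarrow> 'f"
  assumes fin: "finite P" and "\<nu> \<in> P"
    and X: "\<forall>\<alpha>. X \<nu> \<alpha> = (\<Sum>\<nu>'\<in>P. T \<nu> \<nu>' * b \<nu>' \<alpha>)"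
    and "T \<nu> \<nu> \<noteq> 0"
    and others: "\<forall>\<nu>'\<in>P - {\<nu>}. T \<nu> \<nu>' \<noteq> 0 \<longrightarrow> (\<exists>c. \<forall>\<alpha>. b \<nu>' \<alpha> = (\<Sum>\<mu>\<in>P. c \<mu> * X \<mu> \<alpha>))"
  shows "\<exists>c. \<forall>\<alpha>. b \<nu> \<alpha> = (\<Sum>\<mu>\<in>P. c \<mu> * X \<mu> \<alpha>)"
proof -
  let ?Q = "{\<nu>'\<in>P - {\<nu>}. T \<nu> \<nu>' \<noteq> 0}"
  have "\<forall>\<nu>'\<in>?Q. \<exists>c. \<forall>\<alpha>. b \<nu>' \<alpha> = (\<Sum>\<mu>\<in>P. c \<mu> * X \<mu> \<alpha>)" using others by blast
  then obtain C where C: "\<forall>\<nu>'\<in>?Q. \<forall>\<alpha>. b \<nu>' \<alpha> = (\<Sum>\<mu>\<in>P. C \<nu>' \<mu> * X \<mu> \<alpha>)"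
    by metis
  let ?D = "\<lambda>\<mu>. \<Sum>\<nu>'\<in>?Q. T \<nu> \<nu>' * C \<nu>' \<mu>"
  define c where "c \<mu> = ((if \<mu> = \<nu> then 1 else 0) - ?D \<mu>) / T \<nu> \<nu>" for \<mu>
  have "b \<nu> \<alpha> = (\<Sum>\<mu>\<in>P. c \<mu> * X \<mu> \<alpha>)" for \<alpha>
  proof -
    have "X \<nu> \<alpha> = T \<nu> \<nu> * b \<nu> \<alpha> + (\<Sum>\<nu>'\<in>P - {\<nu>}. T \<nu> \<nu>' * b \<nu>' \<alpha>)"
      using X sum.remove[OF fin \<open>\<nu> \<in> P\<close>] by simp
    also have "(\<Sum>\<nu>'\<in>P - {\<nu>}. T \<nu> \<nu>' * b \<nu>' \<alpha>) = (\<Sum>\<nu>'\<in>?Q. T \<nu> \<nu>' * b \<nu>' \<alpha>)"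
      using fin by (intro sum.mono_neutral_right) auto
    also have "\<dots> = (\<Sum>\<nu>'\<in>?Q. \<Sum>\<mu>\<in>P. T \<nu> \<nu>' * C \<nu>' \<mu> * X \<mu> \<alpha>)"
      using C by (simp add: sum_distrib_left mult.assoc)
    also have "\<dots> = (\<Sum>\<mu>\<in>P. ?D \<mu> * X \<mu> \<alpha>)"
      by (subst sum.swap) (simp add: sum_distrib_right)
    finally have "b \<nu> \<alpha> = (X \<nu> \<alpha> - (\<Sum>\<mu>\<in>P. ?D \<mu> * X \<mu> \<alpha>)) / T \<nu> \<nu>"
      using \<open>T \<nu> \<nu> \<noteq> 0\<close> by (simp add: eq_divide_eq algebra_simps)
    also have "X \<nu> \<alpha> = (\<Sum>\<mu>\<in>P. (if \<mu> = \<nu> then 1 else 0) * X \<mu> \<alpha>)"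
      using fin \<open>\<nu> \<in> P\<close> by (simp add: if_distrib[of "\<lambda>x. x * _"] cong: if_cong)
    finally show ?thesis
      unfolding c_def by (simp add: left_diff_distrib sum_subtractf flip: sum_divide_distrib)
  qed
  then show ?thesis by blast
qed

lemma triangular_in_span:
  fixes X b :: "'p \<Rightarrow> 'x \<Rightarrow> 'f::field" and T :: "'p \<Rightarrow> 'p \<Rightarrow> 'f" and r :: "'p \<Rightarrow> nat"
  assumes fin: "finite P"
    and X: "\<forall>\<mu>\<in>P. \<forall>\<alpha>. X \<mu> \<alpha> = (\<Sum>\<nu>\<in>P. T \<mu> \<nu> * b \<nu> \<alpha>)"
    and diag: "\<forall>\<mu>\<in>P. T \<mu> \<mu> \<noteq> 0"
    and tri: "\<forall>\<mu>\<in>P. \<forall>\<nu>\<in>P. T \<mu> \<nu> \<noteq> 0 \<longrightarrow> \<mu> \<noteq> \<nu> \<longrightarrow> r \<mu> < r \<nu>"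
  shows "\<forall>\<nu>\<in>P. \<exists>c. \<forall>\<alpha>. b \<nu> \<alpha> = (\<Sum>\<mu>\<in>P. c \<mu> * X \<mu> \<alpha>)"
proof -
  have "\<exists>c. \<forall>\<alpha>. b \<nu> \<alpha> = (\<Sum>\<mu>\<in>P. c \<mu> * X \<mu> \<alpha>)" if "\<nu> \<in> P" "Max (r ` P) - r \<nu> = k" for \<nu> k
    using that
  proof (induction k arbitrary: \<nu> rule: less_induct)
    case (less k)
    show ?case
    proof (rule in_span_by_solving_row[OF fin less.prems(1)])
      show "\<forall>\<alpha>. X \<nu> \<alpha> = (\<Sum>\<nu>'\<in>P. T \<nu> \<nu>' * b \<nu>' \<alpha>)" "T \<nu> \<nu> \<noteq> 0"
        using X diag less.prems(1) by blast+
      show "\<forall>\<nu>'\<in>P - {\<nu>}. T \<nu> \<nu>' \<noteq> 0 \<longrightarrow> (\<exists>c. \<forall>\<alpha>. b \<nu>' \<alpha> = (\<Sum>\<mu>\<in>P. c \<mu> * X \<mu> \<alpha>))"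
      proof (intro ballI impI)
        fix \<nu>' assume \<nu>': "\<nu>' \<in> P - {\<nu>}" "T \<nu> \<nu>' \<noteq> 0"
        then have "r \<nu> < r \<nu>'" using tri less.prems by auto
        moreover have "r \<nu>' \<le> Max (r ` P)" using fin \<nu>' by auto
        ultimately have "Max (r ` P) - r \<nu>' < k" using less.prems(2) by linarith
        with \<nu>' show "\<exists>c. \<forall>\<alpha>. b \<nu>' \<alpha> = (\<Sum>\<mu>\<in>P. c \<mu> * X \<mu> \<alpha>)" using less.IH by blast
      qed
    qed
  qed
  then show ?thesis by blast
qed

lemma triangular_independent:
  fixes X b :: "'p \<Rightarrow> 'x \<Rightarrow> 'f::field" and T :: "'p \<Rightarrow> 'p \<Rightarrow> 'f" and r :: "'p \<Rightarrow> nat"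
  assumes fin: "finite P"
    and X: "\<forall>\<mu>\<in>P. \<forall>\<alpha>. X \<mu> \<alpha> = (\<Sum>\<nu>\<in>P. T \<mu> \<nu> * b \<nu> \<alpha>)"
    and diag: "\<forall>\<mu>\<in>P. T \<mu> \<mu> \<noteq> 0"
    and tri: "\<forall>\<mu>\<in>P. \<forall>\<nu>\<in>P. T \<mu> \<nu> \<noteq> 0 \<longrightarrow> \<mu> \<noteq> \<nu> \<longrightarrow> r \<mu> < r \<nu>"
    and indep: "\<And>e. \<forall>\<alpha>. (\<Sum>\<nu>\<in>P. e \<nu> * b \<nu> \<alpha>) = 0 \<Longrightarrow> \<forall>\<nu>\<in>P. e \<nu> = 0"
    and d: "\<forall>\<alpha>. (\<Sum>\<mu>\<in>P. d \<mu> * X \<mu> \<alpha>) = 0"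
  shows "\<forall>\<mu>\<in>P. d \<mu> = 0"
proof (rule triangular_coeffs_eq_0[OF fin diag tri])
  have "(\<Sum>\<nu>\<in>P. (\<Sum>\<mu>\<in>P. d \<mu> * T \<mu> \<nu>) * b \<nu> \<alpha>) = (\<Sum>\<mu>\<in>P. d \<mu> * X \<mu> \<alpha>)" for \<alpha>
  proof -
    have "(\<Sum>\<nu>\<in>P. (\<Sum>\<mu>\<in>P. d \<mu> * T \<mu> \<nu>) * b \<nu> \<alpha>) = (\<Sum>\<nu>\<in>P. \<Sum>\<mu>\<in>P. d \<mu> * (T \<mu> \<nu> * b \<nu> \<alpha>))"
      by (simp add: sum_distrib_right mult.assoc)
    also have "\<dots> = (\<Sum>\<mu>\<in>P. d \<mu> * (\<Sum>\<nu>\<in>P. T \<mu> \<nu> * b \<nu> \<alpha>))"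
      by (subst sum.swap) (simp add: sum_distrib_left)
    finally show ?thesis using X by simp
  qed
  then show "\<forall>\<nu>\<in>P. (\<Sum>\<mu>\<in>P. d \<mu> * T \<mu> \<nu>) = 0"
    using d by (intro indep) simp
qed

lemma triangular_unique_expansion:
  fixes X b :: "'p \<Rightarrow> 'x \<Rightarrow> 'f::field" and T :: "'p \<Rightarrow> 'p \<Rightarrow> 'f" and r :: "'p \<Rightarrow> nat"
  assumes fin: "finite P"
    and X: "\<forall>\<mu>\<in>P. \<forall>\<alpha>. X \<mu> \<alpha> = (\<Sum>\<nu>\<in>P. T \<mu> \<nu> * b \<nu> \<alpha>)"
    and diag: "\<forall>\<mu>\<in>P. T \<mu> \<mu> \<noteq> 0"
    and tri: "\<forall>\<mu>\<in>P. \<forall>\<nu>\<in>P. T \<mu> \<nu> \<noteq> 0 \<longrightarrow> \<mu> \<noteq> \<nu> \<longrightarrow> r \<mu> < r \<nu>"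
    and indep: "\<And>e. \<forall>\<alpha>. (\<Sum>\<nu>\<in>P. e \<nu> * b \<nu> \<alpha>) = 0 \<Longrightarrow> \<forall>\<nu>\<in>P. e \<nu> = 0"
    and Y: "\<forall>\<alpha>. Y \<alpha> = (\<Sum>\<nu>\<in>P. g \<nu> * b \<nu> \<alpha>)"
  shows "\<exists>!c. (\<forall>\<mu>. \<mu> \<notin> P \<longrightarrow> c \<mu> = 0) \<and> (\<forall>\<alpha>. Y \<alpha> = (\<Sum>\<mu>\<in>P. c \<mu> * X \<mu> \<alpha>))"
proof (rule ex_ex1I)
  obtain C where C: "\<forall>\<nu>\<in>P. \<forall>\<alpha>. b \<nu> \<alpha> = (\<Sum>\<mu>\<in>P. C \<nu> \<mu> * X \<mu> \<alpha>)"
    using bchoice[OF triangular_in_span[OF fin X diag tri]] by blast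
  define c where "c \<mu> = (if \<mu> \<in> P then \<Sum>\<nu>\<in>P. g \<nu> * C \<nu> \<mu> else 0)" for \<mu>
  have "Y \<alpha> = (\<Sum>\<mu>\<in>P. c \<mu> * X \<mu> \<alpha>)" for \<alpha>
  proof -
    have "Y \<alpha> = (\<Sum>\<nu>\<in>P. \<Sum>\<mu>\<in>P. g \<nu> * C \<nu> \<mu> * X \<mu> \<alpha>)"
      using Y C by (simp add: sum_distrib_left mult.assoc)
    also have "\<dots> = (\<Sum>\<mu>\<in>P. c \<mu> * X \<mu> \<alpha>)"
      unfolding c_def by (subst sum.swap) (simp add: sum_distrib_right)
    finally show ?thesis .
  qed
  moreover have "\<forall>\<mu>. \<mu> \<notin> P \<longrightarrow> c \<mu> = 0" by (simp add: c_def)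
  ultimately show "\<exists>c. (\<forall>\<mu>. \<mu> \<notin> P \<longrightarrow> c \<mu> = 0) \<and> (\<forall>\<alpha>. Y \<alpha> = (\<Sum>\<mu>\<in>P. c \<mu> * X \<mu> \<alpha>))"
    by blast
next
  fix c c' assume c: "(\<forall>\<mu>. \<mu> \<notin> P \<longrightarrow> c \<mu> = 0) \<and> (\<forall>\<alpha>. Y \<alpha> = (\<Sum>\<mu>\<in>P. c \<mu> * X \<mu> \<alpha>))"
    and c': "(\<forall>\<mu>. \<mu> \<notin> P \<longrightarrow> c' \<mu> = 0) \<and> (\<forall>\<alpha>. Y \<alpha> = (\<Sum>\<mu>\<in>P. c' \<mu> * X \<mu> \<alpha>))"
  have "\<forall>\<alpha>. (\<Sum>\<mu>\<in>P. (c \<mu> - c' \<mu>) * X \<mu> \<alpha>) = 0"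
    using c c' by (simp add: left_diff_distrib sum_subtractf)
  then have "\<forall>\<mu>\<in>P. c \<mu> - c' \<mu> = 0"
    using triangular_independent[OF fin X diag tri indep, where d = "\<lambda>\<mu>. c \<mu> - c' \<mu>"] by blast
  then show "c = c'" using c c' by (metis eq_iff_diff_eq_0 ext)
qed

section \<open>Weighted colourings and power sums\<close>

text \<open>With unit weights these are the colourings counted by \<open>chrom_coeff\<close>.\<close>
definition weighted_colourings :: "'b set \<Rightarrow> ('b \<Rightarrow> nat) \<Rightarrow> (nat \<Rightarrow> nat) \<Rightarrow> ('b \<Rightarrow> nat) set" where
  "weighted_colourings I w \<alpha> = {g \<in> I \<rightarrow>\<^sub>E {1..}. \<forall>i. (\<Sum>j\<in>{j\<in>I. g j = i}. w j) = \<alpha> i}"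

lemma weighted_colourings_PiE: "g \<in> weighted_colourings I w \<alpha> \<Longrightarrow> g \<in> I \<rightarrow>\<^sub>E {1..}"
  by (simp add: weighted_colourings_def)

lemma weighted_colourings_cong:
  assumes "\<forall>j\<in>I. w j = w' j"
  shows "weighted_colourings I w \<alpha> = weighted_colourings I w' \<alpha>"
proof -
  have "(\<Sum>j\<in>{j\<in>I. g j = i}. w j) = (\<Sum>j\<in>{j\<in>I. g j = i}. w' j)" for g :: "_ \<Rightarrow> nat" and i
    using assms by (intro sum.cong) auto
  then show ?thesis unfolding weighted_colourings_def by simp
qed

lemma weighted_colourings_pos:
  assumes "finite I" "g \<in> weighted_colourings I w \<alpha>" "j \<in> I" "0 < w j"
  shows "0 < \<alpha> (g j)"
proof -
  have "w j \<le> (\<Sum>j'\<in>{j'\<in>I. g j' = g j}. w j')"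
    using assms(1,3) by (intro member_le_sum) auto
  then show ?thesis using assms(2,4) unfolding weighted_colourings_def by fastforce
qed

lemma finite_weighted_colourings:
  assumes "finite I" "\<forall>j\<in>I. 0 < w j"
  shows "finite (weighted_colourings I w \<alpha>)"
proof (cases "weighted_colourings I w \<alpha> = {}")
  case False
  then obtain g0 where g0: "g0 \<in> weighted_colourings I w \<alpha>" by blast
  text \<open>Every colour used by a weighted colouring carries positive weight under \<open>\<alpha>\<close>,
    so it is already used by \<open>g0\<close>.\<close>
  have "weighted_colourings I w \<alpha> \<subseteq> I \<rightarrow>\<^sub>E g0 ` I"
  proof
    fix g assume g: "g \<in> weighted_colourings I w \<alpha>"
    have "g j \<in> g0 ` I" if "j \<in> I" for j
    proof -
      have "(\<Sum>j'\<in>{j'\<in>I. g0 j' = g j}. w j') \<noteq> 0"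
        using weighted_colourings_pos[OF assms(1) g that] assms(2) that g0
        unfolding weighted_colourings_def by auto
      then show ?thesis by (metis (mono_tags, lifting) empty_Collect_eq image_eqI sum.empty)
    qed
    then show "g \<in> I \<rightarrow>\<^sub>E g0 ` I" using g unfolding weighted_colourings_def by auto
  qed
  then show ?thesis by (rule finite_subset) (simp add: assms(1) finite_PiE)
qed simp

lemma card_weighted_colourings_bij_betw:
  assumes h: "bij_betw h I J" and w: "\<forall>j\<in>I. w' (h j) = w j"
  shows "card (weighted_colourings I w \<alpha>) = card (weighted_colourings J w' \<alpha>)"
proof -
  let ?h' = "inv_into I h"
  have hI: "h j \<in> J" if "j \<in> I" for j using h that by (auto simp: bij_betw_def)
  have h'J: "?h' y \<in> I" if "y \<in> J" for y using h that by (meson bij_betwE bij_betw_inv_into)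
  have hh': "h (?h' y) = y" if "y \<in> J" for y using h that by (meson bij_betw_inv_into_right)
  have h'h: "?h' (h j) = j" if "j \<in> I" for j using h that by (meson bij_betw_inv_into_left)
  have fibres: "(\<Sum>y\<in>{y\<in>J. g y = i}. w' y) = (\<Sum>j\<in>{j\<in>I. g (h j) = i}. w j)" for g :: "_ \<Rightarrow> nat" and i
  proof -
    have "bij_betw h {j\<in>I. g (h j) = i} {y\<in>J. g y = i}"
      using h unfolding bij_betw_def by (auto simp: inj_on_def image_iff intro: hh'[symmetric] h'J)
    then show ?thesis using w by (simp add: sum.reindex_bij_betw[symmetric])
  qed
  have "bij_betw (\<lambda>g. restrict (g \<circ> h) I) (weighted_colourings J w' \<alpha>) (weighted_colourings I w \<alpha>)"
  proof (rule bij_betw_byWitness[where f'="\<lambda>g. restrict (g \<circ> ?h') J"])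
    show "\<forall>g\<in>weighted_colourings J w' \<alpha>. restrict (restrict (g \<circ> h) I \<circ> ?h') J = g"
      using hh' h'J unfolding weighted_colourings_def by (auto simp: PiE_def extensional_def fun_eq_iff)
    show "\<forall>g\<in>weighted_colourings I w \<alpha>. restrict (restrict (g \<circ> ?h') J \<circ> h) I = g"
      using h'h hI unfolding weighted_colourings_def by (auto simp: PiE_def extensional_def fun_eq_iff)
    show "(\<lambda>g. restrict (g \<circ> h) I) ` weighted_colourings J w' \<alpha> \<subseteq> weighted_colourings I w \<alpha>"
    proof clarify
      fix g assume g: "g \<in> weighted_colourings J w' \<alpha>"
      have "{j\<in>I. restrict (g \<circ> h) I j = i} = {j\<in>I. g (h j) = i}" for i by auto
      then show "restrict (g \<circ> h) I \<in> weighted_colourings I w \<alpha>"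
        using g hI unfolding weighted_colourings_def fibres by (auto simp: PiE_def Pi_def)
    qed
    show "(\<lambda>g. restrict (g \<circ> ?h') J) ` weighted_colourings I w \<alpha> \<subseteq> weighted_colourings J w' \<alpha>"
    proof clarify
      fix g assume g: "g \<in> weighted_colourings I w \<alpha>"
      have "(\<Sum>j\<in>{j\<in>I. restrict (g \<circ> ?h') J (h j) = i}. w j) = (\<Sum>j\<in>{j\<in>I. g j = i}. w j)" for i
        using hI h'h by (intro sum.cong) auto
      then show "restrict (g \<circ> ?h') J \<in> weighted_colourings J w' \<alpha>"
        using g h'J unfolding weighted_colourings_def fibres by (auto simp: PiE_def Pi_def)
    qed
  qed
  then show ?thesis by (rule bij_betw_same_card[symmetric])
qed

lemma card_weighted_colourings_image_mset_eq:
  assumes "finite I" "finite J" and mset_eq: "image_mset w (mset_set I) = image_mset w' (mset_set J)"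
  shows "card (weighted_colourings I w \<alpha>) = card (weighted_colourings J w' \<alpha>)"
proof -
  have "card I = card J" using arg_cong[OF mset_eq, of size] by simp
  then obtain b where b: "bij_betw b I J" using assms(1,2) finite_same_card_bij by blast
  have "image_mset (w' \<circ> b) (mset_set I) = image_mset w' (mset_set J)"
    using b by (simp add: image_mset_mset_set bij_betw_def flip: multiset.map_comp)
  then obtain p where p: "p permutes I" "\<forall>x\<in>I. w x = (w' \<circ> b) (p x)"
    using image_mset_eq_implies_permutes[OF assms(1)] mset_eq by metis
  have "bij_betw (b \<circ> p) I J" using bij_betw_trans[OF permutes_imp_bij[OF p(1)] b] .
  then show ?thesis using p(2) by (intro card_weighted_colourings_bij_betw) auto
qed

lemma sum_fibres_comp:
  assumes "finite I"
  shows "(\<Sum>j\<in>{j\<in>I. h (\<pi> j) = i}. w j) = (\<Sum>c\<in>{c\<in>\<pi> ` I. h c = i}. \<Sum>j\<in>{j\<in>I. \<pi> j = c}. w j)"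
proof -
  have "(\<Sum>c\<in>{c\<in>\<pi> ` I. h c = i}. \<Sum>j\<in>{j\<in>I. \<pi> j = c}. w j)
      = (\<Sum>c\<in>{c\<in>\<pi> ` I. h c = i}. \<Sum>j\<in>{j\<in>{j\<in>I. h (\<pi> j) = i}. \<pi> j = c}. w j)"
    by (intro sum.cong) auto
  also have "\<dots> = (\<Sum>j\<in>{j\<in>I. h (\<pi> j) = i}. w j)"
    using assms by (intro sum.group) auto
  finally show ?thesis ..
qed

lemma restrict_comp_in_weighted_colourings_iff:
  assumes "finite I" and "h \<in> extensional (\<pi> ` I)"
  shows "restrict (h \<circ> \<pi>) I \<in> weighted_colourings I w \<alpha>
     \<longleftrightarrow> h \<in> weighted_colourings (\<pi> ` I) (\<lambda>c. \<Sum>j\<in>{j\<in>I. \<pi> j = c}. w j) \<alpha>"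
proof -
  have "{j\<in>I. restrict (h \<circ> \<pi>) I j = i} = {j\<in>I. h (\<pi> j) = i}" for i by auto
  then show ?thesis using assms(2)
    unfolding weighted_colourings_def sum_fibres_comp[OF assms(1), symmetric] by (auto simp: PiE_iff)
qed

lemma inj_on_restrict_comp:
  fixes \<pi> :: "'a \<Rightarrow> 'b"
  shows "inj_on (\<lambda>h :: 'b \<Rightarrow> 'c. restrict (h \<circ> \<pi>) I) (extensional (\<pi> ` I))"
proof (rule inj_onI)
  fix h h' :: "'b \<Rightarrow> 'c" assume h: "h \<in> extensional (\<pi> ` I)" "h' \<in> extensional (\<pi> ` I)"
    and eq: "restrict (h \<circ> \<pi>) I = restrict (h' \<circ> \<pi>) I"
  show "h = h'"
  proof (rule extensionalityI[OF h])
    fix c assume "c \<in> \<pi> ` I"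
    then obtain x where "x \<in> I" "c = \<pi> x" by blast
    then show "h c = h' c" using fun_cong[OF eq, of x] by simp
  qed
qed

lemma ex_restrict_comp_eq:
  assumes "g \<in> extensional I" and const: "\<forall>x\<in>I. \<forall>y\<in>I. \<pi> x = \<pi> y \<longrightarrow> g x = g y"
  shows "\<exists>h\<in>extensional (\<pi> ` I). restrict (h \<circ> \<pi>) I = g"
proof
  let ?h = "restrict (\<lambda>c. the_elem (g ` {j\<in>I. \<pi> j = c})) (\<pi> ` I)"
  have "?h (\<pi> x) = g x" if x: "x \<in> I" for x
  proof -
    have "the_elem (g ` {j\<in>I. \<pi> j = \<pi> x}) = g x"
      by (rule the_elem_image_unique) (use const x in blast)+
    then show ?thesis using x by simp
  qed
  then show "restrict (?h \<circ> \<pi>) I = g"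
    using assms(1) by (auto simp: fun_eq_iff extensional_def)
qed simp

lemma card_weighted_colourings_factor:
  assumes "finite I"
  shows "card {g \<in> weighted_colourings I w \<alpha>. \<forall>x\<in>I. \<forall>y\<in>I. \<pi> x = \<pi> y \<longrightarrow> g x = g y}
       = card (weighted_colourings (\<pi> ` I) (\<lambda>c. \<Sum>j\<in>{j\<in>I. \<pi> j = c}. w j) \<alpha>)"
proof -
  let ?L = "{g \<in> weighted_colourings I w \<alpha>. \<forall>x\<in>I. \<forall>y\<in>I. \<pi> x = \<pi> y \<longrightarrow> g x = g y}"
  let ?R = "weighted_colourings (\<pi> ` I) (\<lambda>c. \<Sum>j\<in>{j\<in>I. \<pi> j = c}. w j) \<alpha>"
  let ?lift = "\<lambda>h. restrict (h \<circ> \<pi>) I"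
  have ext_R: "h \<in> extensional (\<pi> ` I)" if "h \<in> ?R" for h
    using weighted_colourings_PiE[OF that] by (simp add: PiE_iff)
  have img: "?lift ` ?R = ?L"
  proof
    show "?lift ` ?R \<subseteq> ?L"
    proof (rule image_subsetI)
      fix h assume "h \<in> ?R"
      then have "?lift h \<in> weighted_colourings I w \<alpha>"
        using restrict_comp_in_weighted_colourings_iff[OF assms ext_R] by blast
      then show "?lift h \<in> ?L" by simp
    qed
    show "?L \<subseteq> ?lift ` ?R"
    proof
      fix g assume "g \<in> ?L"
      then have gW: "g \<in> weighted_colourings I w \<alpha>"
        and g_const: "\<forall>x\<in>I. \<forall>y\<in>I. \<pi> x = \<pi> y \<longrightarrow> g x = g y" by blast+
      have "g \<in> extensional I" using weighted_colourings_PiE[OF gW] by (simp add: PiE_iff)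
      then obtain h where h: "h \<in> extensional (\<pi> ` I)" "?lift h = g"
        using ex_restrict_comp_eq g_const by blast
      then have "h \<in> ?R" using gW restrict_comp_in_weighted_colourings_iff[OF assms h(1)] by simp
      with h(2) show "g \<in> ?lift ` ?R" by blast
    qed
  qed
  have "inj_on ?lift ?R"
    using inj_on_restrict_comp by (rule inj_on_subset) (use ext_R in blast)
  from card_image[OF this] img show ?thesis by simp
qed

lemma partitions_length_le: "\<mu> \<in> partitions n \<Longrightarrow> length \<mu> \<le> n"
proof -
  have "length xs \<le> sum_list xs" if "\<forall>p\<in>set xs. 0 < p" for xs :: "nat list"
    using that by (induction xs) auto
  then show "\<mu> \<in> partitions n \<Longrightarrow> length \<mu> \<le> n" unfolding partitions_def by auto
qed

lemma finite_partitions: "finite (partitions n)"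
proof (rule finite_subset)
  show "partitions n \<subseteq> {xs. set xs \<subseteq> {..n} \<and> length xs \<le> n}"
    using partitions_length_le member_le_sum_list unfolding partitions_def by fastforce
  show "finite {xs. set xs \<subseteq> {..n} \<and> length xs \<le> n}" by (rule finite_lists_length_le) simp
qed

definition partition_of_mset :: "nat multiset \<Rightarrow> nat list" where
  "partition_of_mset M = rev (sorted_list_of_multiset M)"

lemma mset_partition_of_mset [simp]: "mset (partition_of_mset M) = M"
  by (simp add: partition_of_mset_def)

lemma partition_of_mset_mset:
  assumes "sorted_wrt (\<ge>) \<nu>" shows "partition_of_mset (mset \<nu>) = \<nu>"
proof -
  have "sort \<nu> = rev \<nu>" using assms by (intro properties_for_sort) (simp_all add: sorted_wrt_rev)
  then show ?thesis by (simp add: partition_of_mset_def)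
qed

lemma partition_of_mset_in_partitions:
  assumes "0 \<notin># M" shows "partition_of_mset M \<in> partitions (sum_mset M)"
proof -
  have "sum_list (partition_of_mset M) = sum_mset M"
    by (metis mset_partition_of_mset sum_mset_sum_list)
  moreover have "sorted_wrt (\<ge>) (partition_of_mset M)"
    by (simp add: partition_of_mset_def sorted_wrt_rev)
  ultimately show ?thesis
    using assms unfolding partitions_def by (auto simp: partition_of_mset_def) (metis gr0I)
qed

text \<open>The coefficient of \<open>x\<^sup>\<alpha>\<close> in the power-sum symmetric function \<open>p\<^sub>\<nu>\<close>.\<close>
definition power_sum_coeff :: "nat list \<Rightarrow> (nat \<Rightarrow> nat) \<Rightarrow> nat" where
  "power_sum_coeff \<nu> \<alpha> = card (weighted_colourings {..<length \<nu>} ((!) \<nu>) \<alpha>)"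

lemma image_mset_nth_mset_set: "image_mset ((!) xs) (mset_set {..<length xs}) = mset xs"
proof -
  have "mset xs = mset (map ((!) xs) [0..<length xs])" by (simp add: map_nth)
  then show ?thesis by (simp add: atLeast0LessThan)
qed

lemma card_weighted_colourings_eq_power_sum_coeff:
  assumes "finite C"
  shows "card (weighted_colourings C w \<alpha>) = power_sum_coeff (partition_of_mset (image_mset w (mset_set C))) \<alpha>"
  unfolding power_sum_coeff_def
  using assms by (intro card_weighted_colourings_image_mset_eq) (simp_all add: image_mset_nth_mset_set)

definition partition_exponent :: "nat list \<Rightarrow> nat \<Rightarrow> nat" where
  "partition_exponent \<nu> i = (if 1 \<le> i \<and> i \<le> length \<nu> then \<nu> ! (i - 1) else 0)"

lemma power_sum_coeff_partition_exponent_neq_0: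
  assumes "0 \<notin> set \<nu>"
  shows "power_sum_coeff \<nu> (partition_exponent \<nu>) \<noteq> 0"
proof -
  let ?g = "restrict Suc {..<length \<nu>}"
  have "{j\<in>{..<length \<nu>}. ?g j = i} = (if 1 \<le> i \<and> i \<le> length \<nu> then {i - 1} else {})" for i
    by auto
  then have "?g \<in> weighted_colourings {..<length \<nu>} ((!) \<nu>) (partition_exponent \<nu>)"
    unfolding weighted_colourings_def partition_exponent_def by (simp add: restrict_PiE_iff)
  moreover have "finite (weighted_colourings {..<length \<nu>} ((!) \<nu>) (partition_exponent \<nu>))"
    using assms by (intro finite_weighted_colourings) (auto intro!: gr0I dest: nth_mem)
  ultimately show ?thesis unfolding power_sum_coeff_def by auto
qed

text \<open>A colouring counted by \<open>power_sum_coeff \<nu>' (partition_exponent \<nu>)\<close> with \<open>\<nu>'\<close> not longer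
  than \<open>\<nu>\<close> must hit every colour \<open>1, \<dots>, length \<nu>\<close>, hence is a bijection that matches the parts.\<close>
lemma partition_exponent_colouring_bij:
  assumes g: "g \<in> weighted_colourings {..<length \<nu>'} ((!) \<nu>') (partition_exponent \<nu>)"
    and "0 \<notin> set \<nu>" "0 \<notin> set \<nu>'" and "length \<nu>' \<le> length \<nu>"
  shows "length \<nu>' = length \<nu>" and "bij_betw (\<lambda>j. g j - 1) {..<length \<nu>} {..<length \<nu>}"
    and "\<forall>j<length \<nu>. \<nu>' ! j = \<nu> ! (g j - 1)"
proof -
  let ?L = "length \<nu>"
  have fibre: "(\<Sum>j\<in>{j\<in>{..<length \<nu>'}. g j = i}. \<nu>' ! j) = partition_exponent \<nu> i" for i
    using g unfolding weighted_colourings_def by auto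
  have "0 < \<nu>' ! j" if "j < length \<nu>'" for j using that assms(3) by (metis gr0I nth_mem)
  then have into: "g j \<in> {1..?L}" if "j < length \<nu>'" for j
    using weighted_colourings_pos[OF _ g, of j] that
    by (auto simp: partition_exponent_def split: if_splits)
  have onto: "i \<in> g ` {..<length \<nu>'}" if "i \<in> {1..?L}" for i
  proof -
    have "i - 1 < length \<nu>" using that by auto
    then have "0 < \<nu> ! (i - 1)" using assms(2) by (metis gr0I nth_mem)
    then have "partition_exponent \<nu> i \<noteq> 0" using that by (simp add: partition_exponent_def)
    then have "{j\<in>{..<length \<nu>'}. g j = i} \<noteq> {}" using fibre[of i] by (metis sum.empty)
    then show ?thesis by blast
  qed
  have img: "g ` {..<length \<nu>'} = {1..?L}" using into onto by blast
  then have "?L \<le> length \<nu>'" using card_image_le[of "{..<length \<nu>'}" g] by simp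
  then show len: "length \<nu>' = ?L" using assms(4) by simp
  have inj: "inj_on g {..<?L}" using img len by (intro eq_card_imp_inj_on) auto
  show "\<forall>j<?L. \<nu>' ! j = \<nu> ! (g j - 1)"
  proof (intro allI impI)
    fix j assume "j < ?L"
    then have "{j'\<in>{..<length \<nu>'}. g j' = g j} = {j}" using inj len by (auto simp: inj_on_def)
    then show "\<nu>' ! j = \<nu> ! (g j - 1)"
      using fibre[of "g j"] into[of j] \<open>j < ?L\<close> len by (auto simp: partition_exponent_def)
  qed
  have "inj_on (\<lambda>j. g j - 1) {..<?L}"
  proof (rule inj_onI)
    fix x y assume "x \<in> {..<?L}" "y \<in> {..<?L}" "g x - 1 = g y - 1"
    moreover from this have "g x = g y" using into[of x] into[of y] len by simp arith
    ultimately show "x = y" using inj by (auto dest: inj_onD)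
  qed
  moreover have "(\<lambda>j. g j - 1) ` {..<?L} \<subseteq> {..<?L}" using into len by force
  ultimately show "bij_betw (\<lambda>j. g j - 1) {..<?L} {..<?L}" by (simp add: bij_betw_def endo_inj_surj)
qed

lemma mset_eq_if_power_sum_coeff_partition_exponent_neq_0:
  assumes "power_sum_coeff \<nu>' (partition_exponent \<nu>) \<noteq> 0"
    and "0 \<notin> set \<nu>" "0 \<notin> set \<nu>'" and "length \<nu>' \<le> length \<nu>"
  shows "mset \<nu>' = mset \<nu>"
proof -
  let ?L = "length \<nu>"
  obtain g where g: "g \<in> weighted_colourings {..<length \<nu>'} ((!) \<nu>') (partition_exponent \<nu>)"
    using assms(1) unfolding power_sum_coeff_def by fastforce
  note bij = partition_exponent_colouring_bij[OF g assms(2-4)]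
  have "mset \<nu>' = image_mset ((!) \<nu>') (mset_set {..<?L})"
    using bij(1) image_mset_nth_mset_set[of \<nu>'] by simp
  also have "\<dots> = image_mset ((!) \<nu>) (image_mset (\<lambda>j. g j - 1) (mset_set {..<?L}))"
    using bij(3) by (simp add: multiset.map_comp comp_def) (rule image_mset_cong, simp)
  also have "\<dots> = mset \<nu>"
    using bij(2) by (simp add: image_mset_mset_set bij_betw_def image_mset_nth_mset_set)
  finally show ?thesis .
qed

lemma power_sum_coeff_partition_exponent_eq_0:
  assumes "\<nu> \<in> partitions n" and "\<nu>' \<in> partitions n"
    and "length \<nu>' \<le> length \<nu>" and "\<nu>' \<noteq> \<nu>"
  shows "power_sum_coeff \<nu>' (partition_exponent \<nu>) = 0"
proof (rule ccontr)
  have pos: "0 \<notin> set \<nu>" "0 \<notin> set \<nu>'" and sorted: "sorted_wrt (\<ge>) \<nu>" "sorted_wrt (\<ge>) \<nu>'"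
    using assms(1,2) unfolding partitions_def by auto
  assume "power_sum_coeff \<nu>' (partition_exponent \<nu>) \<noteq> 0"
  then have "mset \<nu>' = mset \<nu>"
    using pos assms(3) by (rule mset_eq_if_power_sum_coeff_partition_exponent_neq_0)
  then have "\<nu>' = \<nu>" using sorted by (metis partition_of_mset_mset)
  with assms(4) show False ..
qed

lemma power_sum_coeffs_independent:
  fixes e :: "nat list \<Rightarrow> 'f::field_char_0"
  assumes "\<forall>\<alpha>. (\<Sum>\<nu>\<in>partitions n. e \<nu> * of_nat (power_sum_coeff \<nu> \<alpha>)) = 0"
  shows "\<forall>\<nu>\<in>partitions n. e \<nu> = 0"
proof (rule triangular_coeffs_eq_0[OF finite_partitions,
      where M = "\<lambda>\<mu> \<nu>. of_nat (power_sum_coeff \<mu> (partition_exponent \<nu>))" and r = "\<lambda>\<mu>. n - length \<mu>"])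
  let ?M = "\<lambda>\<mu> \<nu>. of_nat (power_sum_coeff \<mu> (partition_exponent \<nu>)) :: 'f"
  show "\<forall>\<nu>\<in>partitions n. ?M \<nu> \<nu> \<noteq> 0"
    using power_sum_coeff_partition_exponent_neq_0 unfolding partitions_def by fastforce
  show "\<forall>\<mu>\<in>partitions n. \<forall>\<nu>\<in>partitions n. ?M \<mu> \<nu> \<noteq> 0 \<longrightarrow> \<mu> \<noteq> \<nu> \<longrightarrow> n - length \<mu> < n - length \<nu>"
  proof (intro ballI impI)
    fix \<mu> \<nu> assume \<mu>: "\<mu> \<in> partitions n" and \<nu>: "\<nu> \<in> partitions n" and "?M \<mu> \<nu> \<noteq> 0" "\<mu> \<noteq> \<nu>"
    then have "length \<nu> < length \<mu>"
      using power_sum_coeff_partition_exponent_eq_0[OF \<nu> \<mu>] by fastforce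
    then show "n - length \<mu> < n - length \<nu>" using partitions_length_le[OF \<mu>] by simp
  qed
  show "\<forall>\<nu>\<in>partitions n. (\<Sum>\<mu>\<in>partitions n. e \<mu> * ?M \<mu> \<nu>) = 0"
    using assms by blast
qed

section \<open>Connected components of a set of edges\<close>

definition component_rel :: "'a set \<Rightarrow> 'a set set \<Rightarrow> 'a rel" where
  "component_rel V S = (\<Union>e\<in>S. e \<times> e)\<^sup>* \<inter> V \<times> V"

lemma equiv_component_rel: "equiv V (component_rel V S)"
proof -
  have "sym ((\<Union>e\<in>S. e \<times> e)\<^sup>*)" by (rule sym_rtrancl) (auto simp: sym_def)
  then show ?thesis
    unfolding equiv_def component_rel_def refl_on_def sym_def trans_def by (auto intro: rtrancl_trans)
qed

lemma component_rel_const: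
  assumes "\<forall>e\<in>S. \<forall>x\<in>e. \<forall>y\<in>e. f x = f y" and "(x, y) \<in> component_rel V S"
  shows "f x = f y"
proof -
  have "(x, y) \<in> (\<Union>e\<in>S. e \<times> e)\<^sup>*" using assms(2) unfolding component_rel_def by simp
  then show ?thesis by (induction rule: rtrancl_induct) (use assms(1) in auto)
qed

lemma edge_in_component_rel:
  "e \<in> S \<Longrightarrow> x \<in> e \<Longrightarrow> y \<in> e \<Longrightarrow> x \<in> V \<Longrightarrow> y \<in> V \<Longrightarrow> (x, y) \<in> component_rel V S"
  unfolding component_rel_def by blast

lemma finite_component_classes: "finite V \<Longrightarrow> finite (V // component_rel V S)"
  by (simp add: finite_quotient component_rel_def)

lemma component_fibre_eq:
  assumes "C \<in> V // component_rel V S"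
  shows "{x\<in>V. component_rel V S `` {x} = C} = C"
proof -
  let ?R = "component_rel V S"
  obtain x where x: "x \<in> V" "C = ?R `` {x}" using assms by (auto elim: quotientE)
  have eqv: "equiv V ?R" by (rule equiv_component_rel)
  show ?thesis
  proof (intro equalityI subsetI)
    fix y assume "y \<in> {y\<in>V. ?R `` {y} = C}"
    then show "y \<in> C" using equiv_class_self[OF eqv] by auto
  next
    fix y assume "y \<in> C"
    then have "(x, y) \<in> ?R" using x by simp
    then show "y \<in> {y\<in>V. ?R `` {y} = C}"
      using equiv_class_eq[OF eqv] x unfolding component_rel_def by auto
  qed
qed

lemma card_image_le_card_components:
  assumes "finite V" and const: "\<forall>e\<in>S. \<forall>x\<in>e. \<forall>y\<in>e. f x = f y"
  shows "card (f ` V) \<le> card (V // component_rel V S)"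
proof -
  let ?R = "component_rel V S"
  have "f ` V \<subseteq> (\<lambda>C. the_elem (f ` C)) ` (V // ?R)"
  proof
    fix y assume "y \<in> f ` V"
    then obtain v where v: "v \<in> V" "y = f v" by blast
    have "the_elem (f ` (?R `` {v})) = f v"
    proof (rule the_elem_image_unique)
      have "v \<in> ?R `` {v}" using v(1) unfolding component_rel_def by simp
      then show "?R `` {v} \<noteq> {}" by blast
      show "f x = f v" if "x \<in> ?R `` {v}" for x
      proof -
        from that have "(v, x) \<in> ?R" by simp
        from component_rel_const[OF const this] show ?thesis by simp
      qed
    qed
    then show "y \<in> (\<lambda>C. the_elem (f ` C)) ` (V // ?R)"
      using v by (intro rev_image_eqI[OF quotientI[OF v(1)]]) simp
  qed
  then have "card (f ` V) \<le> card ((\<lambda>C. the_elem (f ` C)) ` (V // ?R))"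
    using finite_component_classes[OF assms(1)] by (intro card_mono) auto
  also have "\<dots> \<le> card (V // ?R)" using finite_component_classes[OF assms(1)] by (rule card_image_le)
  finally show ?thesis .
qed

definition component_type :: "'a set \<Rightarrow> 'a set set \<Rightarrow> nat list" where
  "component_type V S = partition_of_mset (image_mset card (mset_set (V // component_rel V S)))"

lemma component_type_in_partitions:
  assumes "finite V" shows "component_type V S \<in> partitions (card V)"
proof -
  let ?R = "component_rel V S"
  have "(\<Sum>C\<in>V // ?R. card C) = (\<Sum>C\<in>V // ?R. \<Sum>x\<in>{x\<in>V. ?R `` {x} = C}. 1)"
    by (simp add: component_fibre_eq)
  also have "\<dots> = card V"
    using assms finite_component_classes by (subst sum.group) (auto simp: quotientI)
  finally have "sum_mset (image_mset card (mset_set (V // ?R))) = card V"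
    by (simp add: sum_unfold_sum_mset)
  moreover have "0 \<notin># image_mset card (mset_set (V // ?R))"
  proof
    assume "0 \<in># image_mset card (mset_set (V // ?R))"
    then obtain C where "C \<in> V // ?R" "card C = 0" using finite_component_classes[OF assms] by auto
    then show False
      using assms in_quotient_imp_non_empty[OF equiv_component_rel] finite_equiv_class[of V ?R]
      by (auto simp: component_rel_def)
  qed
  ultimately show ?thesis
    unfolding component_type_def by (metis partition_of_mset_in_partitions)
qed

lemma length_component_type:
  "finite V \<Longrightarrow> length (component_type V S) = card (V // component_rel V S)"
  unfolding component_type_def by (metis size_image_mset size_mset mset_partition_of_mset size_mset_set)

definition monochromatic :: "('a \<Rightarrow> nat) \<Rightarrow> 'a set \<Rightarrow> bool" where
  "monochromatic \<kappa> e \<longleftrightarrow> (\<forall>x\<in>e. \<forall>y\<in>e. \<kappa> x = \<kappa> y)"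

lemma monochromatic_iff_const_on_components:
  assumes "\<forall>e\<in>S. e \<subseteq> V"
  shows "(\<forall>e\<in>S. monochromatic \<kappa> e)
     \<longleftrightarrow> (\<forall>x\<in>V. \<forall>y\<in>V. component_rel V S `` {x} = component_rel V S `` {y} \<longrightarrow> \<kappa> x = \<kappa> y)"
proof
  let ?R = "component_rel V S"
  have eqv: "equiv V ?R" by (rule equiv_component_rel)
  assume mono: "\<forall>e\<in>S. monochromatic \<kappa> e"
  show "\<forall>x\<in>V. \<forall>y\<in>V. ?R `` {x} = ?R `` {y} \<longrightarrow> \<kappa> x = \<kappa> y"
  proof (intro ballI impI)
    fix x y assume "x \<in> V" "y \<in> V" "?R `` {x} = ?R `` {y}"
    then have "(x, y) \<in> ?R" using eq_equiv_class_iff[OF eqv] by blast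
    then show "\<kappa> x = \<kappa> y" using mono component_rel_const unfolding monochromatic_def by metis
  qed
next
  let ?R = "component_rel V S"
  have eqv: "equiv V ?R" by (rule equiv_component_rel)
  assume const: "\<forall>x\<in>V. \<forall>y\<in>V. ?R `` {x} = ?R `` {y} \<longrightarrow> \<kappa> x = \<kappa> y"
  show "\<forall>e\<in>S. monochromatic \<kappa> e"
    unfolding monochromatic_def
  proof (intro ballI)
    fix e x y assume "e \<in> S" "x \<in> e" "y \<in> e"
    moreover from this have "x \<in> V" "y \<in> V" using assms by auto
    ultimately have "?R `` {x} = ?R `` {y}"
      using edge_in_component_rel eq_equiv_class_iff[OF eqv] by metis
    then show "\<kappa> x = \<kappa> y" using const \<open>x \<in> V\<close> \<open>y \<in> V\<close> by blast
  qed
qed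

lemma card_monochromatic_colourings:
  assumes "finite V" and "\<forall>e\<in>S. e \<subseteq> V"
  shows "card {\<kappa> \<in> weighted_colourings V (\<lambda>_. 1) \<alpha>. \<forall>e\<in>S. monochromatic \<kappa> e}
       = power_sum_coeff (component_type V S) \<alpha>"
proof -
  let ?R = "component_rel V S"
  have "(\<lambda>x. ?R `` {x}) ` V = V // ?R" by (auto simp: quotient_def)
  moreover have "weighted_colourings (V // ?R) (\<lambda>C. \<Sum>x\<in>{x\<in>V. ?R `` {x} = C}. 1) \<alpha>
      = weighted_colourings (V // ?R) card \<alpha>"
    by (intro weighted_colourings_cong) (simp add: component_fibre_eq)
  ultimately have "card {\<kappa> \<in> weighted_colourings V (\<lambda>_. 1) \<alpha>. \<forall>e\<in>S. monochromatic \<kappa> e}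
      = card (weighted_colourings (V // ?R) card \<alpha>)"
    using monochromatic_iff_const_on_components[OF assms(2)]
      card_weighted_colourings_factor[OF assms(1), of "\<lambda>_. 1" \<alpha> "\<lambda>x. ?R `` {x}"] by simp
  also have "\<dots> = power_sum_coeff (component_type V S) \<alpha>"
    unfolding component_type_def
    by (rule card_weighted_colourings_eq_power_sum_coeff[OF finite_component_classes[OF assms(1)]])
  finally show ?thesis .
qed

section \<open>The power-sum expansion of a chromatic symmetric function\<close>

lemma sum_Pow_neg_one_power_card:
  assumes "finite M"
  shows "(\<Sum>X\<in>Pow M. (-1::'a::comm_ring_1) ^ card X) = (if M = {} then 1 else 0)"
proof -
  have "(\<Prod>x\<in>M. (1::'a) - 1) = (\<Sum>X\<in>Pow M. (-1) ^ card X * (\<Prod>x\<in>X. 1) * (\<Prod>x\<in>M - X. 1))"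
    by (rule prod_diff_conv_sum[OF assms])
  then show ?thesis using assms by (simp add: power_0_left)
qed

lemma card_avoiding_inclusion_exclusion:
  assumes "finite A" and "finite F"
  shows "(of_nat (card {a\<in>A. \<forall>e\<in>F. \<not> P a e}) :: 'b::comm_ring_1)
       = (\<Sum>S\<in>Pow F. (-1) ^ card S * of_nat (card {a\<in>A. \<forall>e\<in>S. P a e}))"
proof -
  have indicator_sum: "(\<Sum>S\<in>Pow F. (-1::'b) ^ card S * (if \<forall>e\<in>S. P a e then 1 else 0))
      = (if \<forall>e\<in>F. \<not> P a e then 1 else 0)" for a
  proof -
    have "(\<Sum>S\<in>Pow F. (-1::'b) ^ card S * (if \<forall>e\<in>S. P a e then 1 else 0))
        = (\<Sum>S\<in>Pow F. if \<forall>e\<in>S. P a e then (-1) ^ card S else 0)"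
      by (intro sum.cong) auto
    also have "\<dots> = (\<Sum>S\<in>{S\<in>Pow F. \<forall>e\<in>S. P a e}. (-1) ^ card S)"
      using assms(2) by (intro sum.inter_filter[symmetric]) simp
    also have "{S\<in>Pow F. \<forall>e\<in>S. P a e} = Pow {e\<in>F. P a e}" by auto
    finally show ?thesis using assms(2) by (simp add: sum_Pow_neg_one_power_card)
  qed
  have card_as_sum: "of_nat (card {a\<in>A. Q a}) = (\<Sum>a\<in>A. if Q a then 1 else (0::'b))" for Q
  proof -
    have "of_nat (card {a\<in>A. Q a}) = (\<Sum>a\<in>{a\<in>A. Q a}. (1::'b))" by simp
    also have "\<dots> = (\<Sum>a\<in>A. if Q a then 1 else 0)" using assms(1) by (rule sum.inter_filter)
    finally show ?thesis .
  qed
  have "(\<Sum>S\<in>Pow F. (-1) ^ card S * (of_nat (card {a\<in>A. \<forall>e\<in>S. P a e}) :: 'b))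
      = (\<Sum>S\<in>Pow F. \<Sum>a\<in>A. (-1) ^ card S * (if \<forall>e\<in>S. P a e then 1 else 0))"
    by (simp only: card_as_sum sum_distrib_left)
  also have "\<dots> = (\<Sum>a\<in>A. if \<forall>e\<in>F. \<not> P a e then 1 else 0)"
    by (subst sum.swap) (simp add: indicator_sum)
  also have "\<dots> = of_nat (card {a\<in>A. \<forall>e\<in>F. \<not> P a e})"
    by (rule card_as_sum[symmetric])
  finally show ?thesis ..
qed

definition edge_sets :: "('a \<Rightarrow> 'a \<Rightarrow> bool) \<Rightarrow> 'a set set" where
  "edge_sets E = {{u, v} | u v. E u v}"

lemma edge_sets_subset: "simple_graph V E \<Longrightarrow> e \<in> edge_sets E \<Longrightarrow> e \<subseteq> V"
  unfolding simple_graph_def edge_sets_def by auto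

lemma finite_edge_sets: "simple_graph V E \<Longrightarrow> finite (edge_sets E)"
proof -
  assume G: "simple_graph V E"
  then have "edge_sets E \<subseteq> Pow V" using edge_sets_subset by blast
  then show ?thesis using G by (simp add: simple_graph_def finite_subset)
qed

lemma chrom_coeff_eq_card_no_monochromatic_edge:
  assumes "simple_graph V E"
  shows "chrom_coeff V E \<alpha>
       = card {\<kappa> \<in> weighted_colourings V (\<lambda>_. 1) \<alpha>. \<forall>e\<in>edge_sets E. \<not> monochromatic \<kappa> e}"
proof -
  have proper_iff: "(\<forall>u\<in>V. \<forall>v\<in>V. E u v \<longrightarrow> \<kappa> u \<noteq> \<kappa> v) \<longleftrightarrow> (\<forall>e\<in>edge_sets E. \<not> monochromatic \<kappa> e)"
    for \<kappa>
  proof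
    assume proper: "\<forall>u\<in>V. \<forall>v\<in>V. E u v \<longrightarrow> \<kappa> u \<noteq> \<kappa> v"
    show "\<forall>e\<in>edge_sets E. \<not> monochromatic \<kappa> e"
    proof
      fix e assume "e \<in> edge_sets E"
      then obtain u v where e: "e = {u, v}" and uv: "E u v" unfolding edge_sets_def by blast
      moreover have "u \<in> V" "v \<in> V" using uv assms unfolding simple_graph_def by auto
      ultimately show "\<not> monochromatic \<kappa> e" using proper unfolding monochromatic_def by auto
    qed
  next
    assume no_mono: "\<forall>e\<in>edge_sets E. \<not> monochromatic \<kappa> e"
    show "\<forall>u\<in>V. \<forall>v\<in>V. E u v \<longrightarrow> \<kappa> u \<noteq> \<kappa> v"
    proof (intro ballI impI)
      fix u v assume "E u v"
      then have "\<not> monochromatic \<kappa> {u, v}" using no_mono unfolding edge_sets_def by blast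
      then show "\<kappa> u \<noteq> \<kappa> v" unfolding monochromatic_def by auto
    qed
  qed
  have "{\<kappa> \<in> proper_colourings V E. \<forall>i. card {v\<in>V. \<kappa> v = i} = \<alpha> i}
      = {\<kappa> \<in> weighted_colourings V (\<lambda>_. 1) \<alpha>. \<forall>e\<in>edge_sets E. \<not> monochromatic \<kappa> e}"
    unfolding proper_colourings_def weighted_colourings_def proper_iff by auto
  then show ?thesis by (simp add: chrom_coeff_def)
qed

text \<open>The coefficient of \<open>p\<^sub>\<nu>\<close> in the power-sum expansion of the chromatic symmetric function.\<close>
definition power_sum_expansion_coeff :: "'a set \<Rightarrow> 'a set set \<Rightarrow> nat list \<Rightarrow> int" where
  "power_sum_expansion_coeff V F \<nu> = (\<Sum>S\<in>{S\<in>Pow F. component_type V S = \<nu>}. (-1) ^ card S)"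

lemma chrom_coeff_power_sum_expansion:
  assumes G: "simple_graph V E"
  shows "(of_nat (chrom_coeff V E \<alpha>) :: 'b::comm_ring_1)
       = (\<Sum>\<nu>\<in>partitions (card V). of_int (power_sum_expansion_coeff V (edge_sets E) \<nu>) * of_nat (power_sum_coeff \<nu> \<alpha>))"
proof -
  have V: "finite V" using G by (simp add: simple_graph_def)
  have fin: "finite (weighted_colourings V (\<lambda>_. 1) \<alpha>)" using V by (simp add: finite_weighted_colourings)
  have "(of_nat (chrom_coeff V E \<alpha>) :: 'b)
      = (\<Sum>S\<in>Pow (edge_sets E). (-1) ^ card S * of_nat (power_sum_coeff (component_type V S) \<alpha>))"
    unfolding chrom_coeff_eq_card_no_monochromatic_edge[OF G]
      card_avoiding_inclusion_exclusion[OF fin finite_edge_sets[OF G]]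
  proof (intro sum.cong refl)
    fix S assume "S \<in> Pow (edge_sets E)"
    then have "\<forall>e\<in>S. e \<subseteq> V" using edge_sets_subset[OF G] by blast
    then show "(-1) ^ card S * of_nat (card {\<kappa> \<in> weighted_colourings V (\<lambda>_. 1) \<alpha>. \<forall>e\<in>S. monochromatic \<kappa> e})
        = (-1) ^ card S * (of_nat (power_sum_coeff (component_type V S) \<alpha>) :: 'b)"
      by (simp only: card_monochromatic_colourings[OF V])
  qed
  also have "\<dots> = (\<Sum>\<nu>\<in>partitions (card V). \<Sum>S\<in>{S\<in>Pow (edge_sets E). component_type V S = \<nu>}.
      (-1) ^ card S * of_nat (power_sum_coeff (component_type V S) \<alpha>))"
  proof (rule sum.group[symmetric])
    show "finite (Pow (edge_sets E))" using finite_edge_sets[OF G] by simp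
    show "component_type V ` Pow (edge_sets E) \<subseteq> partitions (card V)"
      using component_type_in_partitions[OF V] by blast
  qed (rule finite_partitions)
  also have "\<dots> = (\<Sum>\<nu>\<in>partitions (card V). \<Sum>S\<in>{S\<in>Pow (edge_sets E). component_type V S = \<nu>}.
      (-1) ^ card S * of_nat (power_sum_coeff \<nu> \<alpha>))"
    by (intro sum.cong) auto
  also have "\<dots> = (\<Sum>\<nu>\<in>partitions (card V). of_int (power_sum_expansion_coeff V (edge_sets E) \<nu>) * of_nat (power_sum_coeff \<nu> \<alpha>))"
    unfolding power_sum_expansion_coeff_def by (simp add: sum_distrib_right)
  finally show ?thesis .
qed

section \<open>Path forests\<close>

lemma path_forest_V_Sigma: "path_forest_V \<mu> = (SIGMA i:{..<length \<mu>}. {..<\<mu> ! i})"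
  unfolding path_forest_V_def by auto

lemma card_path_forest_V: "card (path_forest_V \<mu>) = sum_list \<mu>"
  unfolding path_forest_V_Sigma by (simp add: sum_list_sum_nth atLeast0LessThan)

lemma simple_graph_path_forest: "simple_graph (path_forest_V \<mu>) (path_forest_E \<mu>)"
  unfolding simple_graph_def path_forest_E_def by (auto simp: path_forest_V_Sigma)

lemma edge_sets_path_forest:
  "e \<in> edge_sets (path_forest_E \<mu>) \<longleftrightarrow> (\<exists>i j. i < length \<mu> \<and> Suc j < \<mu> ! i \<and> e = {(i, j), (i, Suc j)})"
proof
  assume "e \<in> edge_sets (path_forest_E \<mu>)"
  then obtain i j i' j' where e: "e = {(i, j), (i', j')}" and E: "path_forest_E \<mu> (i, j) (i', j')"
    unfolding edge_sets_def by auto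
  then have "i' = i" "j' = Suc j \<or> j = Suc j'" "i < length \<mu>" "j < \<mu> ! i" "j' < \<mu> ! i"
    unfolding path_forest_E_def path_forest_V_def by auto
  then show "\<exists>i j. i < length \<mu> \<and> Suc j < \<mu> ! i \<and> e = {(i, j), (i, Suc j)}"
    using e by (metis insert_commute)
next
  assume "\<exists>i j. i < length \<mu> \<and> Suc j < \<mu> ! i \<and> e = {(i, j), (i, Suc j)}"
  then obtain i j where "i < length \<mu>" "Suc j < \<mu> ! i" and e: "e = {(i, j), (i, Suc j)}" by blast
  then have "path_forest_E \<mu> (i, j) (i, Suc j)" unfolding path_forest_E_def path_forest_V_def by simp
  then show "e \<in> edge_sets (path_forest_E \<mu>)" unfolding edge_sets_def e by blast
qed

lemma component_rel_path_forest:
  "component_rel (path_forest_V \<mu>) (edge_sets (path_forest_E \<mu>))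
     = {(x, y). x \<in> path_forest_V \<mu> \<and> y \<in> path_forest_V \<mu> \<and> fst x = fst y}"
  (is "?R = ?rows")
proof
  have "\<forall>e\<in>edge_sets (path_forest_E \<mu>). \<forall>x\<in>e. \<forall>y\<in>e. fst x = fst y"
  proof (intro ballI)
    fix e x y assume "e \<in> edge_sets (path_forest_E \<mu>)" "x \<in> e" "y \<in> e"
    then show "fst x = fst y" unfolding edge_sets_path_forest by auto
  qed
  from component_rel_const[OF this] show "?R \<subseteq> ?rows" unfolding component_rel_def by auto
next
  have "equiv (path_forest_V \<mu>) ?R" by (rule equiv_component_rel)
  then have "sym ?R" "trans ?R" by (simp_all add: equiv_def)
  have to_start: "((i, 0), (i, j)) \<in> ?R" if "(i, j) \<in> path_forest_V \<mu>" for i j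
    using that
  proof (induction j)
    case 0
    then show ?case unfolding component_rel_def by simp
  next
    case (Suc j)
    then have i: "i < length \<mu>" "Suc j < \<mu> ! i" unfolding path_forest_V_def by auto
    then have "{(i, j), (i, Suc j)} \<in> edge_sets (path_forest_E \<mu>)"
      unfolding edge_sets_path_forest by (intro exI[of _ i] exI[of _ j]) simp
    then have "((i, j), (i, Suc j)) \<in> ?R"
      by (rule edge_in_component_rel) (use i in \<open>simp_all add: path_forest_V_def\<close>)
    moreover have "((i, 0), (i, j)) \<in> ?R" using Suc i by (simp add: path_forest_V_def)
    ultimately show ?case using transD[OF \<open>trans ?R\<close>] by blast
  qed
  show "?rows \<subseteq> ?R"
  proof clarify
    fix i j i' j' assume "(i, j) \<in> path_forest_V \<mu>" "(i', j') \<in> path_forest_V \<mu>" "fst (i, j) = fst (i', j')"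
    then have "((i, j), (i, 0)) \<in> ?R" "((i, 0), (i', j')) \<in> ?R"
      using to_start symD[OF \<open>sym ?R\<close>] by auto
    then show "((i, j), (i', j')) \<in> ?R" using transD[OF \<open>trans ?R\<close>] by blast
  qed
qed

lemma component_type_path_forest:
  assumes "\<mu> \<in> partitions n"
  shows "component_type (path_forest_V \<mu>) (edge_sets (path_forest_E \<mu>)) = \<mu>"
proof -
  let ?V = "path_forest_V \<mu>" and ?L = "length \<mu>"
  let ?R = "component_rel ?V (edge_sets (path_forest_E \<mu>))"
  define row where "row i = {i} \<times> {..<\<mu> ! i}" for i
  have pos: "0 < \<mu> ! i" if "i < ?L" for i using assms that unfolding partitions_def by auto
  have "?R `` {x} = row (fst x)" if "x \<in> ?V" for x
    unfolding component_rel_path_forest using that by (auto simp: row_def path_forest_V_def)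
  then have "?V // ?R = row ` fst ` ?V" unfolding quotient_def by auto
  also have "fst ` ?V = {..<?L}"
  proof
    show "fst ` ?V \<subseteq> {..<?L}" by (auto simp: path_forest_V_def)
    show "{..<?L} \<subseteq> fst ` ?V"
    proof
      fix i assume "i \<in> {..<?L}"
      then have "(i, 0) \<in> ?V" using pos by (simp add: path_forest_V_def)
      then show "i \<in> fst ` ?V" by (rule rev_image_eqI) simp
    qed
  qed
  finally have classes: "?V // ?R = row ` {..<?L}" .
  have "inj_on row {..<?L}" using pos by (auto simp: inj_on_def row_def)
  then have "mset_set (?V // ?R) = image_mset row (mset_set {..<?L})"
    by (simp add: classes image_mset_mset_set)
  then have "image_mset card (mset_set (?V // ?R)) = image_mset ((!) \<mu>) (mset_set {..<?L})"
    by (simp add: multiset.map_comp comp_def row_def)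
  then show ?thesis
    using assms unfolding component_type_def partitions_def
    by (simp add: image_mset_nth_mset_set partition_of_mset_mset)
qed

lemma length_component_type_path_forest_subset:
  assumes "\<mu> \<in> partitions n" and "S \<subset> edge_sets (path_forest_E \<mu>)"
  shows "length \<mu> < length (component_type (path_forest_V \<mu>) S)"
proof -
  let ?V = "path_forest_V \<mu>" and ?L = "length \<mu>"
  obtain e0 where "e0 \<in> edge_sets (path_forest_E \<mu>)" "e0 \<notin> S" using assms(2) by blast
  then obtain i0 j0 where ij0: "i0 < ?L" "Suc j0 < \<mu> ! i0" "{(i0, j0), (i0, Suc j0)} \<notin> S"
    unfolding edge_sets_path_forest by blast
  text \<open>Cutting row \<open>i0\<close> after position \<open>j0\<close> gives a labelling that is constant on the
    edges of \<open>S\<close> and takes \<open>length \<mu> + 1\<close> values.\<close>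
  define f where "f = (\<lambda>(i, j). if i = i0 \<and> j0 < j then ?L else i)"
  have const: "\<forall>e\<in>S. \<forall>x\<in>e. \<forall>y\<in>e. f x = f y"
  proof
    fix e assume e: "e \<in> S"
    then have "e \<in> edge_sets (path_forest_E \<mu>)" using assms(2) by blast
    then obtain i j where "e = {(i, j), (i, Suc j)}" unfolding edge_sets_path_forest by blast
    moreover from this have "\<not> (i = i0 \<and> j = j0)" using e ij0(3) by blast
    ultimately show "\<forall>x\<in>e. \<forall>y\<in>e. f x = f y" unfolding f_def by auto
  qed
  have "{..?L} \<subseteq> f ` ?V"
  proof
    fix k assume "k \<in> {..?L}"
    then consider "k = ?L" | "k < ?L" by fastforce
    then show "k \<in> f ` ?V"
    proof cases
      case 1
      have "(i0, Suc j0) \<in> ?V" using ij0 by (simp add: path_forest_V_def)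
      then show ?thesis by (rule rev_image_eqI) (simp add: f_def 1)
    next
      case 2
      then have "(k, 0) \<in> ?V" using assms(1) unfolding partitions_def path_forest_V_def by auto
      then show ?thesis by (rule rev_image_eqI) (simp add: f_def)
    qed
  qed
  have fin: "finite ?V" using simple_graph_path_forest unfolding simple_graph_def by blast
  have "Suc ?L = card {..?L}" by simp
  also have "\<dots> \<le> card (f ` ?V)" using fin \<open>{..?L} \<subseteq> f ` ?V\<close> by (intro card_mono) auto
  also have "\<dots> \<le> card (?V // component_rel ?V S)" using fin const by (rule card_image_le_card_components)
  also have "\<dots> = length (component_type ?V S)" using fin by (simp add: length_component_type)
  finally show ?thesis by simp
qed

lemma power_sum_expansion_coeff_path_forest:
  assumes "\<mu> \<in> partitions n"
  shows "power_sum_expansion_coeff (path_forest_V \<mu>) (edge_sets (path_forest_E \<mu>)) \<mu> \<noteq> 0"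
    and "power_sum_expansion_coeff (path_forest_V \<mu>) (edge_sets (path_forest_E \<mu>)) \<nu> \<noteq> 0
         \<Longrightarrow> \<nu> \<noteq> \<mu> \<Longrightarrow> length \<mu> < length \<nu>"
proof -
  let ?V = "path_forest_V \<mu>" and ?F = "edge_sets (path_forest_E \<mu>)"
  have "S = ?F" if "S \<subseteq> ?F" "component_type ?V S = \<mu>" for S
    using that length_component_type_path_forest_subset[OF assms, of S] by auto
  then have "{S\<in>Pow ?F. component_type ?V S = \<mu>} = {?F}"
    using component_type_path_forest[OF assms] by auto
  then show "power_sum_expansion_coeff ?V ?F \<mu> \<noteq> 0"
    unfolding power_sum_expansion_coeff_def by simp
  assume "power_sum_expansion_coeff ?V ?F \<nu> \<noteq> 0" "\<nu> \<noteq> \<mu>"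
  then have "{S\<in>Pow ?F. component_type ?V S = \<nu>} \<noteq> {}"
    unfolding power_sum_expansion_coeff_def by (metis sum.empty)
  then obtain S where "S \<subseteq> ?F" "component_type ?V S = \<nu>" by blast
  then show "length \<mu> < length \<nu>"
    using component_type_path_forest[OF assms] length_component_type_path_forest_subset[OF assms] \<open>\<nu> \<noteq> \<mu>\<close>
    by (auto simp: psubset_eq)
qed

lemma ex1_path_expansion:
  assumes G: "simple_graph V E"
  shows "\<exists>!c. path_expansion V E (card V) c"
proof -
  let ?P = "partitions (card V)"
  let ?X = "\<lambda>\<mu> \<alpha>. of_nat (chrom_coeff (path_forest_V \<mu>) (path_forest_E \<mu>) \<alpha>) :: rat"
  let ?b = "\<lambda>\<nu> \<alpha>. of_nat (power_sum_coeff \<nu> \<alpha>) :: rat"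
  let ?T = "\<lambda>\<mu> \<nu>. of_int (power_sum_expansion_coeff (path_forest_V \<mu>) (edge_sets (path_forest_E \<mu>)) \<nu>) :: rat"
  have "\<forall>\<mu>\<in>?P. \<forall>\<alpha>. ?X \<mu> \<alpha> = (\<Sum>\<nu>\<in>?P. ?T \<mu> \<nu> * ?b \<nu> \<alpha>)"
  proof (intro ballI allI)
    fix \<mu> \<alpha> assume "\<mu> \<in> ?P"
    then have "card (path_forest_V \<mu>) = card V" by (simp add: card_path_forest_V partitions_def)
    with chrom_coeff_power_sum_expansion[OF simple_graph_path_forest, of \<mu> \<alpha>]
    show "?X \<mu> \<alpha> = (\<Sum>\<nu>\<in>?P. ?T \<mu> \<nu> * ?b \<nu> \<alpha>)" by simp
  qed
  moreover have "\<forall>\<mu>\<in>?P. ?T \<mu> \<mu> \<noteq> 0"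
    using power_sum_expansion_coeff_path_forest(1) by simp
  moreover have "\<forall>\<mu>\<in>?P. \<forall>\<nu>\<in>?P. ?T \<mu> \<nu> \<noteq> 0 \<longrightarrow> \<mu> \<noteq> \<nu> \<longrightarrow> length \<mu> < length \<nu>"
    using power_sum_expansion_coeff_path_forest(2) by simp
  moreover have "\<forall>\<nu>\<in>?P. e \<nu> = 0" if "\<forall>\<alpha>. (\<Sum>\<nu>\<in>?P. e \<nu> * ?b \<nu> \<alpha>) = 0" for e
    using that by (rule power_sum_coeffs_independent)
  moreover have "\<forall>\<alpha>. of_nat (chrom_coeff V E \<alpha>)
      = (\<Sum>\<nu>\<in>?P. of_int (power_sum_expansion_coeff V (edge_sets E) \<nu>) * ?b \<nu> \<alpha>)"
    using chrom_coeff_power_sum_expansion[OF G] by blast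
  ultimately show ?thesis
    unfolding path_expansion_def by (rule triangular_unique_expansion[OF finite_partitions])
qed

lemma chrom_coeff_distinct_colours:
  assumes G: "simple_graph V E" and n: "card V = n"
  shows "chrom_coeff V E (partition_exponent (replicate n 1))
       = power_sum_coeff (replicate n 1) (partition_exponent (replicate n 1))"
proof -
  let ?\<alpha> = "partition_exponent (replicate n 1)"
  have V: "finite V" using G by (simp add: simple_graph_def)
  have distinct_colours: "\<kappa> u \<noteq> \<kappa> v"
    if \<kappa>: "\<kappa> \<in> weighted_colourings V (\<lambda>_. 1) ?\<alpha>" and "u \<in> V" "v \<in> V" "u \<noteq> v" for \<kappa> u v
  proof
    assume "\<kappa> u = \<kappa> v"
    then have "card {u, v} \<le> card {x\<in>V. \<kappa> x = \<kappa> u}" using V that by (intro card_mono) auto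
    also have "\<dots> = ?\<alpha> (\<kappa> u)" using \<kappa> unfolding weighted_colourings_def by simp
    also have "\<dots> \<le> 1" unfolding partition_exponent_def by auto
    finally show False using \<open>u \<noteq> v\<close> by simp
  qed
  text \<open>Every colour is used at most once, so every colouring of this type is proper.\<close>
  have "\<not> monochromatic \<kappa> e" if "\<kappa> \<in> weighted_colourings V (\<lambda>_. 1) ?\<alpha>" "e \<in> edge_sets E" for \<kappa> e
  proof -
    from that(2) obtain u v where "e = {u, v}" "E u v" unfolding edge_sets_def by blast
    moreover from \<open>E u v\<close> have "u \<in> V" "v \<in> V" "u \<noteq> v" using G unfolding simple_graph_def by auto
    ultimately show ?thesis using that(1) distinct_colours unfolding monochromatic_def by blast
  qed
  then have "{\<kappa> \<in> weighted_colourings V (\<lambda>_. 1) ?\<alpha>. \<forall>e\<in>edge_sets E. \<not> monochromatic \<kappa> e}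
      = weighted_colourings V (\<lambda>_. 1) ?\<alpha>" by blast
  then have "chrom_coeff V E ?\<alpha> = card (weighted_colourings V (\<lambda>_. 1) ?\<alpha>)"
    by (simp only: chrom_coeff_eq_card_no_monochromatic_edge[OF G])
  also have "\<dots> = power_sum_coeff (partition_of_mset (replicate_mset n 1)) ?\<alpha>"
    using card_weighted_colourings_eq_power_sum_coeff[OF V] n by (simp add: image_mset_const_eq)
  also have "partition_of_mset (replicate_mset n 1) = replicate n 1"
    using partition_of_mset_mset[of "replicate n 1"] by (simp add: sorted_wrt_iff_nth_less)
  finally show ?thesis .
qed

theorem theorem3p4:
  fixes V :: "'a set" and E :: "'a \<Rightarrow> 'a \<Rightarrow> bool"
  assumes "simple_graph V E"
  shows "(\<Sum>\<mu>\<in>partitions (card V). path_coeff V E \<mu>) = 1"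
proof -
  let ?P = "partitions (card V)" and ?ones = "replicate (card V) (1::nat)"
  let ?\<alpha> = "partition_exponent ?ones"
  let ?N = "of_nat (power_sum_coeff ?ones ?\<alpha>) :: rat"
  have "path_expansion V E (card V) (path_coeff V E)"
    unfolding path_coeff_def by (rule theI'[OF ex1_path_expansion[OF assms]])
  then have "of_nat (chrom_coeff V E ?\<alpha>)
      = (\<Sum>\<mu>\<in>?P. path_coeff V E \<mu> * of_nat (chrom_coeff (path_forest_V \<mu>) (path_forest_E \<mu>) ?\<alpha>))"
    unfolding path_expansion_def by blast
  text \<open>The coefficient of \<open>x\<^sub>1 \<cdots> x\<^sub>n\<close> is the same for every graph on \<open>n\<close> vertices.\<close>
  also have "\<dots> = (\<Sum>\<mu>\<in>?P. path_coeff V E \<mu> * ?N)"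
  proof (rule sum.cong[OF refl])
    fix \<mu> assume "\<mu> \<in> ?P"
    then have "card (path_forest_V \<mu>) = card V" by (simp add: card_path_forest_V partitions_def)
    then show "path_coeff V E \<mu> * of_nat (chrom_coeff (path_forest_V \<mu>) (path_forest_E \<mu>) ?\<alpha>)
        = path_coeff V E \<mu> * ?N" by (simp only: chrom_coeff_distinct_colours[OF simple_graph_path_forest])
  qed
  finally have "?N = (\<Sum>\<mu>\<in>?P. path_coeff V E \<mu>) * ?N"
    by (simp only: chrom_coeff_distinct_colours[OF assms refl] sum_distrib_right)
  moreover have "?N \<noteq> 0"
    using power_sum_coeff_partition_exponent_neq_0[of ?ones] by simp
  ultimately show ?thesis by simp
qed

end
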